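(* Let $p\in\mathbb Z\{x_1,\dots,x_m\}$ be a polynomial identity of the ring $M_n(\mathbb Z)$. Write $p=f-g$ where $f\in\mathbb N\{x_1,\dots,x_m\}$ is the sum of the terms of $p$ with positive coefficient and $g\in\mathbb N\{x_1,\dots,x_m\}$ is the negative of the sum of the terms of $p$ with negative coefficient. Then $(f,g)$ is a semiring$^\dagger$ polynomial identity of $M_n(R)$ for every commutative semiring$^\dagger$ $R$.
   Context: A semiring$^\dagger$ $(R,+,\cdot,1)$ is a set with binary operations such that $(R,+)$ is an abelian semigroup, $(R,\cdot,1)$ is a monoid, and multiplication distributes over addition (no zero element required). $\mathbb Z\{x_1,\dots,x_m\}$ (resp. $\mathbb N\{x_1,\dots,x_m\}$) is the free associative algebra (resp. free $\mathbb N$-semiring$^\dagger$, the monoid semiring over $\mathbb N$ of the free word monoid) on noncommuting indeterminates. $p$ is a polynomial identity of a ring $S$ if $p(r_1,\dots,r_m)=0$ for all $r_i\in S$. A pair $(f,g)$ is a semiring$^\dagger$ polynomial identity of a semiring$^\dagger$ $S$ if $f(r_1,\dots,r_m)=g(r_1,\dots,r_m)$ for all $r_i\in S$. $M_n(R)$ denotes $n\times n$ matrices with the usual operations. *)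

theory Defs
  imports Main "HOL-Library.List_Lexorder"
begin

(* Noncommutative polynomials in x_0,...,x_{m-1}: finitely supported coefficient
   functions on words (nat list); the word [a1,...,ak] stands for x_a1 ... x_ak.
   n x n matrices over a type 'a: functions nat => nat => 'a, only entries i,j < n matter. *)

type_synonym 'a mat = "nat \<Rightarrow> nat \<Rightarrow> 'a"

definition is_poly :: "nat \<Rightarrow> (nat list \<Rightarrow> 'c::zero) \<Rightarrow> bool" where
  "is_poly m p \<longleftrightarrow> finite {w. p w \<noteq> 0} \<and> (\<forall>w. p w \<noteq> 0 \<longrightarrow> set w \<subseteq> {..<m})"

definition mat_eq :: "nat \<Rightarrow> 'a mat \<Rightarrow> 'a mat \<Rightarrow> bool" where
  "mat_eq n A B \<longleftrightarrow> (\<forall>i<n. \<forall>j<n. A i j = B i j)"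

definition imat_mult :: "nat \<Rightarrow> int mat \<Rightarrow> int mat \<Rightarrow> int mat" where
  "imat_mult n A B = (\<lambda>i j. \<Sum>k<n. A i k * B k j)"

definition imat_one :: "int mat" where
  "imat_one = (\<lambda>i j. if i = j then 1 else 0)"

definition imono :: "nat \<Rightarrow> (nat \<Rightarrow> int mat) \<Rightarrow> nat list \<Rightarrow> int mat" where
  "imono n X w = foldr (\<lambda>a M. imat_mult n (X a) M) w imat_one"

definition ieval :: "nat \<Rightarrow> (nat list \<Rightarrow> int) \<Rightarrow> (nat \<Rightarrow> int mat) \<Rightarrow> int mat" where
  "ieval n p X = (\<lambda>i j. \<Sum>w\<in>{w. p w \<noteq> 0}. p w * imono n X w i j)"

definition is_PI_Mn_Z :: "nat \<Rightarrow> nat \<Rightarrow> (nat list \<Rightarrow> int) \<Rightarrow> bool" where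
  "is_PI_Mn_Z m n p \<longleftrightarrow> is_poly m p \<and> (\<forall>X. mat_eq n (ieval n p X) (\<lambda>_ _. 0))"

fun nsum :: "'a::ab_semigroup_add list \<Rightarrow> 'a" where
  "nsum [] = undefined"
| "nsum [x] = x"
| "nsum (x # y # xs) = x + nsum (y # xs)"

definition smat_add :: "'a::ab_semigroup_add mat \<Rightarrow> 'a mat \<Rightarrow> 'a mat" where
  "smat_add A B = (\<lambda>i j. A i j + B i j)"

definition smat_mult :: "nat \<Rightarrow> 'a::comm_semiring mat \<Rightarrow> 'a mat \<Rightarrow> 'a mat" where
  "smat_mult n A B = (\<lambda>i j. nsum (map (\<lambda>k. A i k * B k j) [0..<n]))"

(* c-fold sum of a matrix, c >= 1 *)
definition smat_nat_smult :: "nat \<Rightarrow> 'a::ab_semigroup_add mat \<Rightarrow> 'a mat" where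
  "smat_nat_smult c A = (\<lambda>i j. nsum (replicate c (A i j)))"

(* monomial of a nonempty word; the empty word (constant term) would need an identity
   matrix, which does not exist without zero; it never occurs for identities of M_n(Z), n>=1 *)
fun smono :: "nat \<Rightarrow> (nat \<Rightarrow> 'a::comm_semiring mat) \<Rightarrow> nat list \<Rightarrow> 'a mat" where
  "smono n X [] = undefined"
| "smono n X [a] = X a"
| "smono n X (a # b # w) = smat_mult n (X a) (smono n X (b # w))"

definition seval :: "nat \<Rightarrow> (nat list \<Rightarrow> nat) \<Rightarrow> (nat \<Rightarrow> 'a::comm_semiring mat) \<Rightarrow> 'a mat" where
  "seval n q X = (\<lambda>i j. nsum (map (\<lambda>w. smat_nat_smult (q w) (smono n X w) i j)
                                  (sorted_list_of_set {w. q w \<noteq> 0})))"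

definition is_sPI_Mn :: "nat \<Rightarrow> (nat list \<Rightarrow> nat) \<Rightarrow> (nat list \<Rightarrow> nat) \<Rightarrow> 'a::{comm_semiring, comm_monoid_mult} itself \<Rightarrow> bool" where
  "is_sPI_Mn n f g _ \<longleftrightarrow> (\<forall>X :: nat \<Rightarrow> 'a mat. mat_eq n (seval n f X) (seval n g X))"

definition pos_part :: "(nat list \<Rightarrow> int) \<Rightarrow> nat list \<Rightarrow> nat" where
  "pos_part p = (\<lambda>w. nat (p w))"

definition neg_part :: "(nat list \<Rightarrow> int) \<Rightarrow> nat list \<Rightarrow> nat" where
  "neg_part p = (\<lambda>w. nat (- p w))"

end

theory Submission
  imports Defs "HOL-Library.Multiset" "HOL-Computational_Algebra.Polynomial"
begin

text \<open>Entry (i,j) of a product of matrices X_a_1 \<cdots> X_a_r expands into a sum, over all index paths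
  i = k_0, k_1, \<dots>, k_r = j, of the commutative monomials X_a_1(k_0,k_1) \<cdots> X_a_r(k_(r-1),k_r).
  The expansion uses only associativity, commutativity and distributivity, so it holds over any
  commutative semiring without zero, with nonempty sums. Hence entry (i,j) of f(X) and of g(X) is
  the sum of a multiset of commutative monomials in the matrix entries, the same two multisets
  for every R. Over \<int> the difference of these two sums is entry (i,j) of p(X), which vanishes
  identically; since a polynomial vanishing on all of \<int>^N is zero, the two multisets coincide,
  and then their sums agree in every R. The constant term of p is 0 (evaluate at zero matrices),
  so only nonempty words occur.\<close>

lemma nsum_Cons: "xs \<noteq> [] \<Longrightarrow> nsum (x # xs) = x + nsum xs"
  by (cases xs) auto

lemma nsum_append:
  "xs \<noteq> [] \<Longrightarrow> ys \<noteq> [] \<Longrightarrow> nsum (xs @ ys) = nsum xs + nsum ys"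
  by (induction xs rule: induct_list012) (simp_all add: nsum_Cons add.assoc)

lemma nsum_concat:
  "xss \<noteq> [] \<Longrightarrow> (\<And>xs. xs \<in> set xss \<Longrightarrow> xs \<noteq> []) \<Longrightarrow> nsum (concat xss) = nsum (map nsum xss)"
  by (induction xss rule: induct_list012) (simp_all add: nsum_append)

lemma nsum_distrib_left:
  fixes c :: "'a::comm_semiring"
  shows "xs \<noteq> [] \<Longrightarrow> c * nsum xs = nsum (map ((*) c) xs)"
  by (induction xs rule: induct_list012) (simp_all add: distrib_left)

lemma comp_fun_commute_plus: "comp_fun_commute ((+) :: 'a::ab_semigroup_add \<Rightarrow> 'a \<Rightarrow> 'a)"
  by unfold_locales (auto simp: fun_eq_iff add.left_commute)

lemma nsum_Cons_eq_fold_mset: "nsum (x # xs) = fold_mset (+) x (mset xs)"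
proof -
  interpret comp_fun_commute "(+) :: 'a \<Rightarrow> 'a \<Rightarrow> 'a" by (rule comp_fun_commute_plus)
  show ?thesis
    by (induction xs arbitrary: x) (simp_all add: fold_mset_fun_left_comm add.commute)
qed

lemma nsum_mset_eq:
  assumes "mset xs = mset ys"
  shows "nsum xs = nsum ys"
proof (cases xs)
  case Nil
  then show ?thesis using assms by simp
next
  case (Cons x xs')
  then obtain y ys' where ys: "ys = y # ys'" "add_mset x (mset xs') = add_mset y (mset ys')"
    using assms by (cases ys) auto
  interpret comp_fun_commute "(+) :: 'a \<Rightarrow> 'a \<Rightarrow> 'a" by (rule comp_fun_commute_plus)
  from ys(2) consider "x = y" "mset xs' = mset ys'"
    | K where "mset xs' = add_mset y K" "mset ys' = add_mset x K"
    by (auto simp: add_eq_conv_ex)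
  then show ?thesis
  proof cases
    case 2
    then show ?thesis using Cons ys(1)
      by (simp add: nsum_Cons_eq_fold_mset fold_mset_fun_left_comm add.commute)
  qed (simp add: Cons ys(1) nsum_Cons_eq_fold_mset)
qed

section \<open>Expansion of matrix words along index paths\<close>

lemma sum_list_concat: "sum_list (concat xss) = sum_list (map sum_list (xss :: 'a::monoid_add list list))"
  by (induction xss) auto

text \<open>A path of the word a_1 \<dots> a_r from i to j is the list of entry positions (a_s, k_(s-1), k_s)
  with k_0 = i, k_r = j and all k_s < n.\<close>

fun index_paths :: "nat \<Rightarrow> nat list \<Rightarrow> nat \<Rightarrow> nat \<Rightarrow> (nat \<times> nat \<times> nat) list list" where
  "index_paths n [] i j = (if i = j then [[]] else [])"
| "index_paths n (a # w) i j =
     concat (map (\<lambda>k. map ((#) (a, i, k)) (index_paths n w k j)) [0..<n])"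

definition path_weight :: "(nat \<Rightarrow> 'a::comm_monoid_mult mat) \<Rightarrow> (nat \<times> nat \<times> nat) list \<Rightarrow> 'a" where
  "path_weight X \<pi> = prod_list (map (\<lambda>(a, k, l). X a k l) \<pi>)"

lemma index_paths_nonempty: "j < n \<Longrightarrow> w \<noteq> [] \<or> i = j \<Longrightarrow> index_paths n w i j \<noteq> []"
proof (induction w arbitrary: i)
  case (Cons a w)
  then have "index_paths n w j j \<noteq> []" "j \<in> set [0..<n]" by auto
  then show ?case by auto
qed simp

lemma index_paths_singleton: "j < n \<Longrightarrow> index_paths n [a] i j = [[(a, i, j)]]"
proof -
  have "concat (map (\<lambda>k. map ((#) (a, i, k)) (if k = j then [[]] else [])) [0..<n])
      = (if j < n then [[(a, i, j)]] else [])" for n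
    by (induction n) auto
  then show "j < n \<Longrightarrow> ?thesis" by simp
qed

lemma imono_eq_sum_paths: "imono n X w i j = sum_list (map (path_weight X) (index_paths n w i j))"
proof (induction w arbitrary: i)
  case Nil
  then show ?case by (simp add: imono_def imat_one_def path_weight_def)
next
  case (Cons a w)
  have "imono n X (a # w) i j = (\<Sum>k<n. X a i k * imono n X w k j)"
    by (simp add: imono_def imat_mult_def)
  also have "\<dots> = (\<Sum>k\<leftarrow>[0..<n]. sum_list (map (path_weight X) (map ((#) (a, i, k)) (index_paths n w k j))))"
    by (simp add: Cons sum_list_const_mult[symmetric] o_def path_weight_def
        sum_set_upt_conv_sum_list_nat[symmetric] lessThan_atLeast0)
  also have "\<dots> = sum_list (map (path_weight X) (index_paths n (a # w) i j))"
    by (simp add: map_concat sum_list_concat o_def)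
  finally show ?case .
qed

lemma smono_eq_nsum_paths:
  fixes X :: "nat \<Rightarrow> 'a::{comm_semiring, comm_monoid_mult} mat"
  shows "w \<noteq> [] \<Longrightarrow> i < n \<Longrightarrow> j < n \<Longrightarrow>
    smono n X w i j = nsum (map (path_weight X) (index_paths n w i j))"
proof (induction w arbitrary: i rule: induct_list012)
  case (2 a)
  then show ?case by (simp add: index_paths_singleton path_weight_def del: index_paths.simps)
next
  case (3 a b w)
  let ?P = "\<lambda>k. index_paths n (b # w) k j"
  have nonempty: "?P k \<noteq> []" for k
    using 3 by (simp add: index_paths_nonempty del: index_paths.simps)
  have IH: "smono n X (b # w) k j = nsum (map (path_weight X) (?P k))" if "k < n" for k
    using 3 that by blast
  have "smono n X (a # b # w) i j = nsum (map (\<lambda>k. X a i k * smono n X (b # w) k j) [0..<n])"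
    by (simp add: smat_mult_def)
  also have "\<dots> = nsum (map (\<lambda>k. nsum (map (path_weight X) (map ((#) (a, i, k)) (?P k)))) [0..<n])"
    using IH nonempty
    by (intro arg_cong[where f = nsum] map_cong) (auto simp: nsum_distrib_left path_weight_def o_def)
  also have "\<dots> = nsum (concat (map (\<lambda>k. map (path_weight X) (map ((#) (a, i, k)) (?P k))) [0..<n]))"
    using 3 nonempty by (subst nsum_concat) (auto simp: o_def)
  also have "\<dots> = nsum (map (path_weight X) (index_paths n (a # b # w) i j))"
    by (simp only: index_paths.simps(2)[of n a] map_concat map_map o_def)
  finally show ?case .
qed simp

definition poly_paths :: "nat \<Rightarrow> (nat list \<Rightarrow> nat) \<Rightarrow> nat \<Rightarrow> nat \<Rightarrow> (nat \<times> nat \<times> nat) list list" where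
  "poly_paths n q i j =
     concat (map (\<lambda>w. concat (replicate (q w) (index_paths n w i j))) (sorted_list_of_set {w. q w \<noteq> 0}))"

lemma seval_eq_nsum_poly_paths:
  fixes X :: "nat \<Rightarrow> 'a::{comm_semiring, comm_monoid_mult} mat"
  assumes fin: "finite {w. q w \<noteq> 0}" and no_const: "q [] = 0" and ij: "i < n" "j < n"
  shows "seval n q X i j = nsum (map (path_weight X) (poly_paths n q i j))"
proof -
  define ws where "ws = sorted_list_of_set {w. q w \<noteq> 0}"
  have in_ws: "w \<in> set ws \<longleftrightarrow> q w \<noteq> 0" for w
    using fin by (simp add: ws_def)
  let ?L = "\<lambda>w. map (path_weight X) (index_paths n w i j)"
  have nonempty: "?L w \<noteq> []" if "w \<in> set ws" for w
    using that in_ws no_const ij index_paths_nonempty by (metis list.map_disc_iff)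
  have entry: "smat_nat_smult (q w) (smono n X w) i j = nsum (concat (replicate (q w) (?L w)))"
    if "w \<in> set ws" for w
  proof -
    have "w \<noteq> []" "q w \<noteq> 0" using that in_ws no_const by auto
    then have "smat_nat_smult (q w) (smono n X w) i j = nsum (map nsum (replicate (q w) (?L w)))"
      by (simp add: smat_nat_smult_def smono_eq_nsum_paths ij)
    also have "\<dots> = nsum (concat (replicate (q w) (?L w)))"
      using \<open>q w \<noteq> 0\<close> nonempty[OF that] by (subst nsum_concat) auto
    finally show ?thesis .
  qed
  show ?thesis
  proof (cases "ws = []")
    case True
    then show ?thesis unfolding seval_def poly_paths_def ws_def[symmetric] by simp
  next
    case False
    have "seval n q X i j = nsum (map (\<lambda>w. nsum (concat (replicate (q w) (?L w)))) ws)"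
      unfolding seval_def ws_def[symmetric] by (intro arg_cong[where f = nsum] map_cong) (simp_all add: entry)
    also have "\<dots> = nsum (concat (map (\<lambda>w. concat (replicate (q w) (?L w))) ws))"
      using False nonempty in_ws by (subst nsum_concat) (auto simp: o_def)
    also have "\<dots> = nsum (map (path_weight X) (poly_paths n q i j))"
      by (simp add: poly_paths_def ws_def map_concat o_def)
    finally show ?thesis .
  qed
qed

lemma sum_poly_paths_eq_sum_imono:
  assumes "finite W" "{w. q w \<noteq> 0} \<subseteq> W"
  shows "sum_list (map (path_weight X) (poly_paths n q i j)) = (\<Sum>w\<in>W. int (q w) * imono n X w i j)"
proof -
  have "sum_list (concat (replicate c L)) = of_nat c * sum_list L" for c and L :: "int list"
    by (induction c) (auto simp: distrib_right)
  then have "sum_list (map (path_weight X) (poly_paths n q i j))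
      = sum_list (map (\<lambda>w. int (q w) * imono n X w i j) (sorted_list_of_set {w. q w \<noteq> 0}))"
    by (simp add: poly_paths_def map_concat sum_list_concat o_def imono_eq_sum_paths)
  also have "\<dots> = (\<Sum>w | q w \<noteq> 0. int (q w) * imono n X w i j)"
    using finite_subset[OF assms(2,1)] by (simp add: sum_list_distinct_conv_sum_set)
  also have "\<dots> = (\<Sum>w\<in>W. int (q w) * imono n X w i j)"
    using assms by (intro sum.mono_neutral_left) auto
  finally show ?thesis .
qed

section \<open>Linear independence of commutative monomials\<close>

definition monomial_eval :: "('v \<Rightarrow> 'a::comm_monoid_mult) \<Rightarrow> 'v multiset \<Rightarrow> 'a" where
  "monomial_eval v M = prod_mset (image_mset v M)"

lemma sum_mset_image_eq_sum_count:
  fixes h :: "'v \<Rightarrow> 'a::comm_semiring_1"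
  assumes "finite T" "set_mset A \<subseteq> T"
  shows "(\<Sum>x\<in>#A. h x) = (\<Sum>x\<in>T. of_nat (count A x) * h x)"
  using assms(2)
proof (induction A)
  case (add a A)
  have "of_nat (count (add_mset a A) x) * h x = of_nat (count A x) * h x + (if x = a then h x else 0)"
    for x by (simp add: distrib_right add.commute)
  then have "(\<Sum>x\<in>T. of_nat (count (add_mset a A) x) * h x)
      = (\<Sum>x\<in>T. of_nat (count A x) * h x) + (\<Sum>x\<in>T. if x = a then h x else 0)"
    by (simp add: sum.distrib)
  also have "(\<Sum>x\<in>T. if x = a then h x else 0) = h a"
    using add.prems assms(1) by simp
  finally show ?case
    using add by (simp add: add.commute)
qed simp

lemma sum_coeffs_of_vanishing_exponent_sum:
  fixes a :: "'i \<Rightarrow> 'a::{idom, ring_char_0}" and e :: "'i \<Rightarrow> nat"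
  assumes "finite T" and vanishing: "\<And>t. (\<Sum>i\<in>T. a i * t ^ e i) = 0"
  shows "(\<Sum>i | i \<in> T \<and> e i = d. a i) = 0"
proof -
  define Q where "Q = (\<Sum>i\<in>T. monom (a i) (e i))"
  have "poly Q t = 0" for t
    using vanishing by (simp add: Q_def poly_sum poly_monom)
  then have "Q = 0"
    using poly_all_0_iff_0 by blast
  then have "coeff Q d = 0" by simp
  then show ?thesis
    using assms(1) by (simp add: Q_def coeff_sum coeff_monom sum.inter_filter)
qed

lemma monomial_eval_fun_upd:
  "monomial_eval (v(x := t)) M = monomial_eval v (filter_mset (\<lambda>y. y \<noteq> x) M) * t ^ count M x"
proof -
  have split: "M = filter_mset (\<lambda>y. y \<noteq> x) M + replicate_mset (count M x) x"
    by (simp add: multiset_eq_iff)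
  have "monomial_eval (v(x := t)) (filter_mset (\<lambda>y. y \<noteq> x) M) = monomial_eval v (filter_mset (\<lambda>y. y \<noteq> x) M)"
    unfolding monomial_eval_def by (intro arg_cong[where f = prod_mset] image_mset_cong) auto
  then show ?thesis
    by (subst (1) split) (simp add: monomial_eval_def)
qed

lemma monomial_coeff_eq_0_if_vanishing:
  fixes c :: "'v multiset \<Rightarrow> 'a::{idom, ring_char_0}"
  assumes "finite S" "finite T" "\<forall>M\<in>T. set_mset M \<subseteq> S"
    and "\<forall>v. (\<Sum>M\<in>T. c M * monomial_eval v M) = 0" and "M0 \<in> T"
  shows "c M0 = 0"
  using assms
proof (induction S arbitrary: T c M0 rule: finite_induct)
  case empty
  then have "T = {{#}}" "M0 = {#}" by auto
  then show ?case using empty by (simp add: monomial_eval_def)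
next
  case (insert x S)
  define rest where "rest M = filter_mset (\<lambda>y. y \<noteq> x) M" for M
  define d where "d = count M0 x"
  define Td where "Td = {M \<in> T. count M x = d}"
  define c' where "c' M' = c (M' + replicate_mset d x)" for M'
  have rest_Td: "rest M + replicate_mset d x = M" if "M \<in> Td" for M
    using that by (auto simp: rest_def Td_def multiset_eq_iff)
  have inj: "inj_on rest Td"
    by (metis inj_onI rest_Td)
  have "(\<Sum>M'\<in>rest ` Td. c' M' * monomial_eval v M') = 0" for v
  proof -
    have "(\<Sum>M\<in>T. c M * monomial_eval v (rest M) * t ^ count M x) = 0" for t
      using insert.prems(3)[rule_format, of "v(x := t)"]
      by (simp add: monomial_eval_fun_upd rest_def mult.assoc)
    then have "(\<Sum>M | M \<in> T \<and> count M x = d. c M * monomial_eval v (rest M)) = 0"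
      by (rule sum_coeffs_of_vanishing_exponent_sum[OF insert.prems(1)])
    moreover have "(\<Sum>M'\<in>rest ` Td. c' M' * monomial_eval v M') = (\<Sum>M\<in>Td. c M * monomial_eval v (rest M))"
      unfolding sum.reindex[OF inj] c'_def by (intro sum.cong) (simp_all add: rest_Td)
    ultimately show ?thesis
      by (simp add: Td_def)
  qed
  moreover have "\<forall>M\<in>rest ` Td. set_mset M \<subseteq> S"
    using insert.prems(2) by (auto simp: Td_def rest_def)
  moreover have "M0 \<in> Td" "finite Td"
    using insert.prems by (simp_all add: Td_def d_def)
  ultimately have "c' (rest M0) = 0"
    using insert.IH by blast
  then show ?case
    using rest_Td[OF \<open>M0 \<in> Td\<close>] by (simp add: c'_def)
qed

lemma multiset_eq_if_monomial_sums_eq: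
  fixes A B :: "'v multiset multiset"
  assumes "\<And>v :: 'v \<Rightarrow> 'a::{idom, ring_char_0}.
    (\<Sum>M\<in>#A. monomial_eval v M) = (\<Sum>M\<in>#B. monomial_eval v M)"
  shows "A = B"
proof -
  define T where "T = set_mset A \<union> set_mset B"
  define c :: "'v multiset \<Rightarrow> 'a" where "c M = of_nat (count A M) - of_nat (count B M)" for M
  have "finite T" by (simp add: T_def)
  have "(\<Sum>M\<in>T. c M * monomial_eval v M) = 0" for v
    using assms[of v] sum_mset_image_eq_sum_count[OF \<open>finite T\<close>, of A "monomial_eval v"]
      sum_mset_image_eq_sum_count[OF \<open>finite T\<close>, of B "monomial_eval v"]
    by (simp add: T_def c_def left_diff_distrib sum_subtractf)
  then have "c M = 0" if "M \<in> T" for M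
    using monomial_coeff_eq_0_if_vanishing[of "\<Union> (set_mset ` T)" T] \<open>finite T\<close> that by auto
  then have "count A M = count B M" for M
    by (cases "M \<in> T") (auto simp: c_def T_def not_in_iff)
  then show ?thesis
    by (simp add: multiset_eq_iff)
qed

section \<open>Polynomial identities of \<open>M\<^sub>n(\<int>)\<close>\<close>

lemma path_weight_eq_monomial_eval: "path_weight X \<pi> = monomial_eval (\<lambda>(a, k, l). X a k l) (mset \<pi>)"
  by (simp add: path_weight_def monomial_eval_def prod_mset_prod_list[symmetric])

lemma mset_map_path_weight:
  "mset (map (path_weight X) L) = image_mset (monomial_eval (\<lambda>(a, k, l). X a k l)) (mset (map mset L))"
  by (induction L) (simp_all add: path_weight_eq_monomial_eval)

lemma is_PI_Mn_Z_constant_term: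
  assumes "is_PI_Mn_Z m n p" "0 < n"
  shows "p [] = 0"
proof -
  have zero_mono: "imono n (\<lambda>_ _ _. 0) w = (if w = [] then imat_one else (\<lambda>_ _. 0))" for w
    by (cases w) (auto simp: imono_def imat_mult_def)
  have "finite {w. p w \<noteq> 0}"
    using assms(1) by (simp add: is_PI_Mn_Z_def is_poly_def)
  have "ieval n p (\<lambda>_ _ _. 0) 0 0 = (\<Sum>w | p w \<noteq> 0. if w = [] then p w else 0)"
    unfolding ieval_def zero_mono by (intro sum.cong) (auto simp: imat_one_def)
  also have "\<dots> = p []"
    using \<open>finite {w. p w \<noteq> 0}\<close> by (simp add: sum.delta)
  finally have "ieval n p (\<lambda>_ _ _. 0) 0 0 = p []" .
  then show ?thesis
    using assms by (simp add: is_PI_Mn_Z_def mat_eq_def)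
qed

lemma sum_paths_pos_part_eq_neg_part:
  fixes Y :: "nat \<Rightarrow> int mat"
  assumes "is_PI_Mn_Z m n p" "i < n" "j < n"
  shows "sum_list (map (path_weight Y) (poly_paths n (pos_part p) i j))
    = sum_list (map (path_weight Y) (poly_paths n (neg_part p) i j))"
proof -
  let ?W = "{w. p w \<noteq> 0}"
  have "finite ?W"
    using assms(1) by (simp add: is_PI_Mn_Z_def is_poly_def)
  moreover have "{w. pos_part p w \<noteq> 0} \<subseteq> ?W" "{w. neg_part p w \<noteq> 0} \<subseteq> ?W"
    by (auto simp: pos_part_def neg_part_def)
  moreover have "int (pos_part p w) - int (neg_part p w) = p w" for w
    by (simp add: pos_part_def neg_part_def)
  then have "(\<Sum>w\<in>?W. int (pos_part p w) * imono n Y w i j) - (\<Sum>w\<in>?W. int (neg_part p w) * imono n Y w i j)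
      = ieval n p Y i j"
    by (simp only: ieval_def sum_subtractf[symmetric] left_diff_distrib[symmetric])
  moreover have "ieval n p Y i j = 0"
    using assms by (simp add: is_PI_Mn_Z_def mat_eq_def)
  ultimately show ?thesis
    by (simp add: sum_poly_paths_eq_sum_imono)
qed

lemma mset_paths_pos_part_eq_neg_part:
  assumes "is_PI_Mn_Z m n p" "i < n" "j < n"
  shows "mset (map mset (poly_paths n (pos_part p) i j)) = mset (map mset (poly_paths n (neg_part p) i j))"
proof (rule multiset_eq_if_monomial_sums_eq[where 'a = int])
  fix v :: "nat \<times> nat \<times> nat \<Rightarrow> int"
  define Y where "Y a k l = v (a, k, l)" for a k l
  have "(\<lambda>(a, k, l). Y a k l) = v"
    by (auto simp: Y_def)
  then have "(\<Sum>M\<in>#mset (map mset L). monomial_eval v M) = sum_list (map (path_weight Y) L)" for L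
    by (metis mset_map_path_weight sum_mset_sum_list)
  then show "(\<Sum>M\<in>#mset (map mset (poly_paths n (pos_part p) i j)). monomial_eval v M)
      = (\<Sum>M\<in>#mset (map mset (poly_paths n (neg_part p) i j)). monomial_eval v M)"
    using sum_paths_pos_part_eq_neg_part[OF assms] by simp
qed

theorem corollary5p5:
  fixes m n :: nat and p :: "nat list \<Rightarrow> int"
  assumes "is_PI_Mn_Z m n p"
  shows "is_sPI_Mn n (pos_part p) (neg_part p) TYPE('a::{comm_semiring, comm_monoid_mult})"
  unfolding is_sPI_Mn_def mat_eq_def
proof (intro allI impI)
  fix X :: "nat \<Rightarrow> 'a mat" and i j
  assume ij: "i < n" "j < n"
  have "p [] = 0"
    using is_PI_Mn_Z_constant_term[OF assms] ij by simp
  moreover have "finite {w. p w \<noteq> 0}"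
    using assms by (simp add: is_PI_Mn_Z_def is_poly_def)
  ultimately have pos: "finite {w. pos_part p w \<noteq> 0}" "pos_part p [] = 0"
    and neg: "finite {w. neg_part p w \<noteq> 0}" "neg_part p [] = 0"
    by (auto simp: pos_part_def neg_part_def elim!: finite_subset[rotated])
  have "seval n (pos_part p) X i j = nsum (map (path_weight X) (poly_paths n (pos_part p) i j))"
    by (rule seval_eq_nsum_poly_paths[OF pos ij])
  also have "\<dots> = nsum (map (path_weight X) (poly_paths n (neg_part p) i j))"
    by (intro nsum_mset_eq) (simp only: mset_map_path_weight mset_paths_pos_part_eq_neg_part[OF assms ij])
  also have "\<dots> = seval n (neg_part p) X i j"
    by (rule seval_eq_nsum_poly_paths[OF neg ij, symmetric])
  finally show "seval n (pos_part p) X i j = seval n (neg_part p) X i j" .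
qed

end
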